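(* Let $d\ge 1$ and $s\ge 2$ be integers. If $s\equiv 1\pmod{d+2}$, then there are exactly two $(s,s+1)$-core partitions with $d$-distinct parts of largest size; otherwise there is exactly one such partition of largest size.
   Context: A partition $\lambda=(\lambda_1,\ldots,\lambda_l)$ is a finite nonincreasing sequence of positive integers (the empty partition is allowed); its size is $|\lambda|=\lambda_1+\cdots+\lambda_l$. $\lambda$ is a partition with $d$-distinct parts if $\lambda_i-\lambda_{i+1}\ge d$ for all $1\le i\le l-1$. In the Young diagram of $\lambda$, the hook length of box $(i,j)$ is the number of boxes directly to its right, plus the number directly below it, plus one. $\lambda$ is an $(s,s+1)$-core partition if no box has hook length $s$ or $s+1$. "Of largest size" means of maximum size among all $(s,s+1)$-core partitions with $d$-distinct parts. *)

theory Defs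
  imports Main
begin

definition is_partition :: "nat list \<Rightarrow> bool" where
  "is_partition la \<longleftrightarrow> sorted_wrt (\<ge>) la \<and> (\<forall>x \<in> set la. 0 < x)"

definition psize :: "nat list \<Rightarrow> nat" where
  "psize la = sum_list la"

definition d_distinct :: "nat \<Rightarrow> nat list \<Rightarrow> bool" where
  "d_distinct d la \<longleftrightarrow> (\<forall>i. Suc i < length la \<longrightarrow> la ! (Suc i) + d \<le> la ! i)"

definition conj_part :: "nat list \<Rightarrow> nat \<Rightarrow> nat" where
  "conj_part la j = length (filter (\<lambda>x. j < x) la)"

definition in_diagram :: "nat list \<Rightarrow> nat \<Rightarrow> nat \<Rightarrow> bool" where
  "in_diagram la i j \<longleftrightarrow> i < length la \<and> j < la ! i"

definition hook_length :: "nat list \<Rightarrow> nat \<Rightarrow> nat \<Rightarrow> nat" where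
  "hook_length la i j = (la ! i - Suc j) + (conj_part la j - Suc i) + 1"

definition is_core :: "nat \<Rightarrow> nat list \<Rightarrow> bool" where
  "is_core t la \<longleftrightarrow> (\<forall>i j. in_diagram la i j \<longrightarrow> hook_length la i j \<noteq> t)"

definition core_dd :: "nat \<Rightarrow> nat \<Rightarrow> nat list set" where
  "core_dd s d = {la. is_partition la \<and> d_distinct d la \<and> is_core s la \<and> is_core (s+1) la}"

end

theory Submission
  imports Defs
begin

text \<open>
  Along the first row of a partition with distinct parts the hook lengths decrease by at most 2
  per step, from \<open>\<lambda>\<^sub>1 + \<ell> - 1\<close> down to 1; so a nonempty \<open>(s,s+1)\<close>-core with distinct parts
  satisfies \<open>\<lambda>\<^sub>1 + \<ell> \<le> s\<close>. With \<open>d\<close>-distinct parts this forces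
  \<open>\<lambda>\<^sub>i \<le> s - \<ell> - i d\<close>, and the arithmetic progression \<open>(s - \<ell> - i d)\<^sub>i\<^sub><\<^sub>\<ell>\<close> is itself such a core.
  The largest partitions are therefore progressions, and twice their size,
  \<open>2\<ell>(s - \<ell>) - d\<ell>(\<ell> - 1)\<close>, is a concave quadratic in \<open>\<ell>\<close>. Writing \<open>s = (d+2)q + r + 1\<close>
  with \<open>0 \<le> r < d+2\<close>, it is maximal exactly at \<open>\<ell> = q + 1\<close>, and also at \<open>\<ell> = q\<close> iff \<open>r = 0\<close>.
\<close>

lemma d_distinct_nth_le:
  assumes "d_distinct d la" "j < length la" "i \<le> j"
  shows "la ! j + (j - i) * d \<le> la ! i"
  using assms(2,3)
proof (induction j)
  case 0
  then show ?case by simp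
next
  case (Suc j)
  show ?case
  proof (cases "i = Suc j")
    case False
    then have "i \<le> j" using Suc.prems by simp
    then have "la ! j + (j - i) * d \<le> la ! i" using Suc by simp
    moreover have "la ! Suc j + d \<le> la ! j" using assms(1) Suc.prems unfolding d_distinct_def by blast
    ultimately show ?thesis using \<open>i \<le> j\<close> by (simp add: Suc_diff_le)
  qed simp
qed

lemma d_distinct_imp_distinct:
  assumes "d_distinct d la" "d \<ge> 1"
  shows "distinct la"
proof -
  have less: "la ! j < la ! i" if "i < j" "j < length la" for i j
  proof -
    have "1 \<le> (j - i) * d" using that(1) assms(2) by simp
    then show ?thesis using d_distinct_nth_le[OF assms(1) that(2), of i] that(1) by linarith
  qed
  show ?thesis
    unfolding distinct_conv_nth
  proof (intro allI impI)
    fix i j assume "i < length la" "j < length la" "i \<noteq> j"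
    then show "la ! i \<noteq> la ! j" using less[of i j] less[of j i] by (cases "i < j") auto
  qed
qed

lemma partition_nth_le_hd:
  assumes "is_partition la" "i < length la"
  shows "la ! i \<le> la ! 0"
  using assms unfolding is_partition_def
  by (cases i) (auto simp: sorted_wrt_iff_nth_less)

lemma conj_part_0:
  assumes "is_partition la"
  shows "conj_part la 0 = length la"
  using assms unfolding is_partition_def conj_part_def by (simp add: filter_True)

lemma conj_part_Suc:
  "distinct xs \<Longrightarrow> conj_part xs j = conj_part xs (Suc j) + (if Suc j \<in> set xs then 1 else 0)"
proof (induction xs)
  case (Cons a xs)
  have "conj_part (a # xs) k = (if k < a then 1 else 0) + conj_part xs k" for k
    by (simp add: conj_part_def)
  then show ?case using Cons by (cases "a = Suc j") auto
qed (simp add: conj_part_def)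

lemma hook_length_le:
  assumes "is_partition la" "in_diagram la i j"
  shows "hook_length la i j + 1 \<le> la ! 0 + length la"
proof -
  have "la ! i \<le> la ! 0" using partition_nth_le_hd assms unfolding in_diagram_def by blast
  moreover have "conj_part la j \<le> length la" unfolding conj_part_def by simp
  ultimately show ?thesis using assms(2) unfolding hook_length_def in_diagram_def by linarith
qed

lemma is_core_if_hd_plus_length_le:
  assumes "is_partition la" "la \<noteq> [] \<longrightarrow> la ! 0 + length la \<le> t"
  shows "is_core t la"
  unfolding is_core_def
proof (intro allI impI)
  fix i j assume ij: "in_diagram la i j"
  then have "la \<noteq> []" unfolding in_diagram_def by auto
  then show "hook_length la i j \<noteq> t" using hook_length_le[OF assms(1) ij] assms(2) by linarith
qed

lemma slow_descent_hits:
  fixes h :: "nat \<Rightarrow> nat"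
  assumes "s \<le> h 0" "h n < s" "\<forall>j<n. h j \<le> h (Suc j) + 2"
  shows "\<exists>j<n. h j = s \<or> h j = s + 1"
  using assms
proof (induction n)
  case (Suc n)
  show ?case
  proof (cases "h n < s")
    case True
    then obtain j where "j < n" "h j = s \<or> h j = s + 1" using Suc by auto
    then show ?thesis by (intro exI[of _ j]) simp
  next
    case False
    moreover have "h n \<le> h (Suc n) + 2" using Suc.prems(3) by simp
    ultimately have "h n = s \<or> h n = s + 1" using Suc.prems(2) by linarith
    then show ?thesis by blast
  qed
qed simp

lemma distinct_core_hd_plus_length_le:
  assumes "is_partition la" "distinct la" "is_core s la" "is_core (s + 1) la"
    and "s \<ge> 2" "la \<noteq> []"
  shows "la ! 0 + length la \<le> s"
proof (rule ccontr)
  assume long: "\<not> la ! 0 + length la \<le> s"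
  define a where "a = la ! 0"
  define h where "h j = hook_length la 0 j" for j
  have le_a: "x \<le> a" if "x \<in> set la" for x
    using that partition_nth_le_hd[OF assms(1)] unfolding a_def by (auto simp: in_set_conv_nth)
  have a_in: "a \<in> set la" unfolding a_def using assms(6) by simp
  then have "a \<ge> 1" using assms(1) unfolding is_partition_def by auto
  have conj_a: "conj_part la a = 0"
    unfolding conj_part_def using le_a by (simp add: filter_empty_conv not_less)
  have conj_pos: "conj_part la j \<ge> 1" if "j < a" for j
    unfolding conj_part_def using a_in that
    by (metis One_nat_def Suc_leI filter_empty_conv length_greater_0_conv)
  have h: "h j = a - Suc j + conj_part la j" if "j < a" for j
    using conj_pos[OF that] unfolding h_def hook_length_def a_def by simp
  have conj_step: "conj_part la j \<le> conj_part la (Suc j) + 1" for j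
    using conj_part_Suc[OF assms(2), of j] by simp
  have "s \<le> h 0"
    using h[of 0] \<open>a \<ge> 1\<close> conj_part_0[OF assms(1)] long unfolding a_def by simp
  moreover have "h (a - 1) < s"
    using h[of "a - 1"] conj_step[of "a - 1"] conj_a \<open>a \<ge> 1\<close> assms(5) by simp
  moreover have "\<forall>j<a - 1. h j \<le> h (Suc j) + 2"
  proof (intro allI impI)
    fix j assume "j < a - 1"
    then have "j < a" "Suc j < a" by auto
    then show "h j \<le> h (Suc j) + 2" using h conj_step[of j] by simp
  qed
  ultimately obtain j where "j < a - 1" "h j = s \<or> h j = s + 1"
    using slow_descent_hits by blast
  moreover have "in_diagram la 0 j"
    unfolding in_diagram_def using assms(6) \<open>j < a - 1\<close> unfolding a_def by auto
  ultimately show False using assms(3,4) unfolding is_core_def h_def by blast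
qed

definition ap_partition :: "nat \<Rightarrow> nat \<Rightarrow> nat \<Rightarrow> nat list" where
  "ap_partition s d l = map (\<lambda>i. s - l - i * d) [0..<l]"

text \<open>The condition \<open>l + (l - 1) d < s\<close> says that the last part of \<open>ap_partition s d l\<close> is positive.\<close>

definition ap_double_size :: "nat \<Rightarrow> nat \<Rightarrow> nat \<Rightarrow> int" where
  "ap_double_size s d l = 2 * int l * (int s - int l) - int d * int l * (int l - 1)"

lemma length_ap_partition [simp]: "length (ap_partition s d l) = l"
  by (simp add: ap_partition_def)

lemma nth_ap_partition [simp]: "i < l \<Longrightarrow> ap_partition s d l ! i = s - l - i * d"
  by (simp add: ap_partition_def)

lemma ap_partition_parts_pos:
  fixes l d s :: nat
  assumes "l + (l - 1) * d < s" "i < l"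
  shows "l + i * d < s"
proof -
  have "i \<le> l - 1" using assms(2) by linarith
  then have "i * d \<le> (l - 1) * d" by (rule mult_le_mono1)
  then show ?thesis using assms(1) by linarith
qed

lemma ap_partition_in_core_dd:
  assumes "l + (l - 1) * d < s"
  shows "ap_partition s d l \<in> core_dd s d"
proof -
  have pos: "l + i * d < s" if "i < l" for i using ap_partition_parts_pos[OF assms that] .
  have "sorted_wrt (\<ge>) (ap_partition s d l)"
    unfolding sorted_wrt_iff_nth_less by (simp add: diff_le_mono2)
  moreover have "\<forall>x\<in>set (ap_partition s d l). 0 < x"
    using pos by (auto simp: ap_partition_def)
  ultimately have part: "is_partition (ap_partition s d l)"
    unfolding is_partition_def by blast
  moreover have "d_distinct d (ap_partition s d l)"
    unfolding d_distinct_def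
  proof (intro allI impI)
    fix i assume "Suc i < length (ap_partition s d l)"
    then have "Suc i < l" by simp
    with pos have "l + Suc i * d < s" by blast
    with \<open>Suc i < l\<close> show "ap_partition s d l ! Suc i + d \<le> ap_partition s d l ! i" by simp
  qed
  moreover have "ap_partition s d l \<noteq> [] \<longrightarrow> ap_partition s d l ! 0 + l \<le> s"
  proof
    assume "ap_partition s d l \<noteq> []"
    then have "0 < l" by (metis length_ap_partition length_greater_0_conv)
    then show "ap_partition s d l ! 0 + l \<le> s" using assms by simp
  qed
  ultimately show ?thesis
    unfolding core_dd_def using is_core_if_hd_plus_length_le[OF part] by auto
qed

lemma core_dd_le_ap_partition:
  assumes "d \<ge> 1" "s \<ge> 2" "la \<in> core_dd s d"
  defines "l \<equiv> length la"
  shows "l + (l - 1) * d < s" and "\<forall>i<l. la ! i \<le> ap_partition s d l ! i"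
proof -
  have part: "is_partition la" and dd: "d_distinct d la"
    using assms(3) unfolding core_dd_def by auto
  have top: "la \<noteq> [] \<Longrightarrow> la ! 0 + l \<le> s"
    using distinct_core_hd_plus_length_le[OF part d_distinct_imp_distinct[OF dd assms(1)]]
      assms(2,3) unfolding core_dd_def l_def by blast
  have descent: "la ! i + i * d \<le> la ! 0" if "i < l" for i
    using d_distinct_nth_le[OF dd, of i 0] that unfolding l_def by simp
  show "\<forall>i<l. la ! i \<le> ap_partition s d l ! i"
    using descent top unfolding l_def by fastforce
  show "l + (l - 1) * d < s"
  proof (cases "la = []")
    case False
    then have "l \<ge> 1" unfolding l_def by (simp add: Suc_le_eq)
    moreover have "la ! (l - 1) > 0"
      using part \<open>l \<ge> 1\<close> unfolding is_partition_def l_def by (simp add: nth_mem)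
    ultimately show ?thesis using descent[of "l - 1"] top[OF False] by simp
  qed (use assms(2) l_def in simp)
qed

lemma double_sum_arith_progression:
  fixes a d :: "'a :: comm_ring_1"
  shows "2 * (\<Sum>i<n. a - of_nat i * d) = 2 * of_nat n * a - d * of_nat n * (of_nat n - 1)"
  by (induction n) (simp_all add: algebra_simps)

lemma psize_ap_partition:
  assumes "l + (l - 1) * d < s"
  shows "2 * int (psize (ap_partition s d l)) = ap_double_size s d l"
proof -
  have "int (psize (ap_partition s d l)) = (\<Sum>i<l. int (s - l - i * d))"
    unfolding psize_def ap_partition_def by (simp add: sum_list_sum_nth atLeast0LessThan)
  also have "\<dots> = (\<Sum>i<l. int (s - l) - int i * int d)"
  proof (intro sum.cong refl)
    fix i assume "i \<in> {..<l}"
    then have "l + i * d \<le> s" using ap_partition_parts_pos[OF assms] by (simp add: less_imp_le)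
    then show "int (s - l - i * d) = int (s - l) - int i * int d" by (simp add: of_nat_diff)
  qed
  finally show ?thesis
    using double_sum_arith_progression[of "int (s - l)" "int d" l] assms
    unfolding ap_double_size_def by (simp add: of_nat_diff)
qed

lemma psize_le_pointwise:
  assumes "length xs = length ys" "\<forall>i<length xs. xs ! i \<le> ys ! i"
  shows "psize xs \<le> psize ys" and "psize xs = psize ys \<Longrightarrow> xs = ys"
proof -
  have sum: "psize zs = (\<Sum>i<length xs. zs ! i)" if "length zs = length xs" for zs
    unfolding psize_def using that by (simp add: sum_list_sum_nth atLeast0LessThan)
  show "psize xs \<le> psize ys"
    unfolding sum[OF refl] sum[OF assms(1)[symmetric]] using assms(2) by (intro sum_mono) simp
  show "xs = ys" if "psize xs = psize ys"
  proof (rule ccontr)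
    assume "xs \<noteq> ys"
    then obtain i where "i < length xs" "xs ! i < ys ! i"
      using assms nth_equalityI le_neq_implies_less by metis
    then have "psize xs < psize ys"
      unfolding sum[OF refl] sum[OF assms(1)[symmetric]]
      using assms(2) by (intro sum_strict_mono_ex1) auto
    then show False using that by simp
  qed
qed

lemma core_dd_double_size_le:
  assumes "d \<ge> 1" "s \<ge> 2" "la \<in> core_dd s d"
  shows "2 * int (psize la) \<le> ap_double_size s d (length la)"
    and "2 * int (psize la) = ap_double_size s d (length la) \<Longrightarrow> la = ap_partition s d (length la)"
proof -
  note bound = core_dd_le_ap_partition[OF assms]
  note size = psize_ap_partition[OF bound(1)]
  show "2 * int (psize la) \<le> ap_double_size s d (length la)"
    using psize_le_pointwise(1)[of la "ap_partition s d (length la)"] bound(2) size by simp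
  show "la = ap_partition s d (length la)" if "2 * int (psize la) = ap_double_size s d (length la)"
    using psize_le_pointwise(2)[of la "ap_partition s d (length la)"] bound(2) size that by simp
qed

text \<open>With \<open>l = q + k\<close>, \<open>s = D q + r + 1\<close> and \<open>D = d + 2\<close> this product is
  \<open>ap_double_size s d (q + 1) - ap_double_size s d l\<close>.\<close>

lemma peak_gap_nonneg:
  fixes k r D :: int
  assumes "0 \<le> r" "r < D"
  shows "0 \<le> (1 - k) * (2 * r - D * k)"
    and "(1 - k) * (2 * r - D * k) = 0 \<Longrightarrow> k = 1 \<or> k = 0 \<and> r = 0"
proof -
  consider "k < 0" | "k = 0" | "k = 1" | "k \<ge> 2" by linarith
  then have "0 \<le> (1 - k) * (2 * r - D * k) \<and>
      ((1 - k) * (2 * r - D * k) = 0 \<longrightarrow> k = 1 \<or> k = 0 \<and> r = 0)"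
  proof cases
    case 1
    then have "D * k < 0" using assms by (simp add: mult_pos_neg)
    then show ?thesis using 1 assms by (simp add: zero_less_mult_iff)
  next
    case 4
    then have "D * 2 \<le> D * k" using assms by (intro mult_left_mono) auto
    then have "2 * r < D * k" using assms(2) by linarith
    then have "0 < (1 - k) * (2 * r - D * k)" using 4 by (intro mult_neg_neg) auto
    then show ?thesis by (metis less_irrefl order_less_imp_le)
  qed (use assms in auto)
  then show "0 \<le> (1 - k) * (2 * r - D * k)"
    and "(1 - k) * (2 * r - D * k) = 0 \<Longrightarrow> k = 1 \<or> k = 0 \<and> r = 0" by blast+
qed

lemma ap_double_size_le_peak:
  assumes "s = (d + 2) * q + r + 1" "r < d + 2"
  shows "ap_double_size s d l \<le> ap_double_size s d (q + 1)"
    and "ap_double_size s d l = ap_double_size s d (q + 1)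
      \<longleftrightarrow> l \<in> (if r = 0 then {q, q + 1} else {q + 1})"
proof -
  define k where "k = int l - int q"
  have gap: "ap_double_size s d (q + 1) - ap_double_size s d l
      = (1 - k) * (2 * int r - int (d + 2) * k)"
    unfolding ap_double_size_def k_def assms(1) by (simp add: algebra_simps)
  have "0 \<le> int r" "int r < int (d + 2)" using assms(2) by simp_all
  note peak = peak_gap_nonneg[OF this, of k]
  show "ap_double_size s d l \<le> ap_double_size s d (q + 1)"
    using gap peak(1) by linarith
  show "ap_double_size s d l = ap_double_size s d (q + 1) \<longleftrightarrow> l \<in> (if r = 0 then {q, q + 1} else {q + 1})"
  proof
    assume "ap_double_size s d l = ap_double_size s d (q + 1)"
    then have "(1 - k) * (2 * int r - int (d + 2) * k) = 0" using gap by linarith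
    then have "k = 1 \<or> k = 0 \<and> int r = 0" by (rule peak(2))
    then show "l \<in> (if r = 0 then {q, q + 1} else {q + 1})" unfolding k_def by auto
  next
    assume "l \<in> (if r = 0 then {q, q + 1} else {q + 1})"
    then have "k = 1 \<or> k = 0 \<and> r = 0" unfolding k_def by (auto split: if_splits)
    then show "ap_double_size s d l = ap_double_size s d (q + 1)" using gap by auto
  qed
qed

lemma largest_core_dd:
  assumes "d \<ge> 1" "s \<ge> 2" "s = (d + 2) * q + r + 1" "r < d + 2"
  shows "{la \<in> core_dd s d. \<forall>mu \<in> core_dd s d. psize mu \<le> psize la}
      = ap_partition s d ` (if r = 0 then {q, q + 1} else {q + 1})" (is "?S = _ ` ?L")
proof -
  note peak = ap_double_size_le_peak[OF assms(3,4)]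
  have "q + r \<ge> 1" using assms(2,3) by (cases q) auto
  then have feasible: "l + (l - 1) * d < s" if "l \<in> ?L" for l
    using that assms(3) by (auto simp: algebra_simps split: if_splits)
  have ap_size: "2 * int (psize (ap_partition s d l)) = ap_double_size s d (q + 1)" if "l \<in> ?L" for l
    using psize_ap_partition[OF feasible[OF that]] peak(2)[of l] that by simp
  have core_size: "2 * int (psize mu) \<le> ap_double_size s d (q + 1)" if "mu \<in> core_dd s d" for mu
    using core_dd_double_size_le(1)[OF assms(1,2) that] peak(1) by (rule order_trans)
  have ap_largest: "ap_partition s d l \<in> ?S" if "l \<in> ?L" for l
    using ap_partition_in_core_dd[OF feasible[OF that]] ap_size[OF that] core_size by force
  have peak_in: "q + 1 \<in> ?L" by simp
  have "la \<in> ap_partition s d ` ?L" if "la \<in> ?S" for la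
  proof -
    have core: "la \<in> core_dd s d" and largest: "psize (ap_partition s d (q + 1)) \<le> psize la"
      using that ap_largest[OF peak_in] by auto
    have "ap_double_size s d (q + 1) \<le> 2 * int (psize la)"
      using largest ap_size[OF peak_in] by simp
    then have "2 * int (psize la) = ap_double_size s d (length la)"
      and "length la \<in> ?L"
      using core_dd_double_size_le(1)[OF assms(1,2) core] peak[of "length la"] by auto
    then show ?thesis using core_dd_double_size_le(2)[OF assms(1,2) core] by blast
  qed
  then show ?thesis using ap_largest by blast
qed

theorem mainTheorem6:
  fixes s d :: nat
  assumes "d \<ge> 1" and "s \<ge> 2"
  shows "card {la \<in> core_dd s d. \<forall>mu \<in> core_dd s d. psize mu \<le> psize la}
           = (if s mod (d + 2) = 1 then 2 else 1)"
proof -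
  define q where "q = (s - 1) div (d + 2)"
  define r where "r = (s - 1) mod (d + 2)"
  have "s - 1 = (d + 2) * q + r" unfolding q_def r_def by (rule mult_div_mod_eq[symmetric])
  then have s: "s = (d + 2) * q + r + 1" using assms(2) by linarith
  have "r < d + 2" unfolding r_def by simp
  have "s mod (d + 2) = (r + 1) mod (d + 2)"
    using s by (metis add.assoc mod_mult_self4)
  then have r0: "s mod (d + 2) = 1 \<longleftrightarrow> r = 0"
    using \<open>r < d + 2\<close> by (cases "r + 1 = d + 2") auto
  have "card (ap_partition s d ` (if r = 0 then {q, q + 1} else {q + 1}))
      = card (if r = 0 then {q, q + 1} else {q + 1})"
    by (intro card_image inj_on_inverseI[where g = length]) simp
  then show ?thesis
    unfolding largest_core_dd[OF assms s \<open>r < d + 2\<close>] r0 by simp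
qed

end
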